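(* Let $\mathcal{L}\subseteq\{0,1\}^n$ be a nonempty lattice, i.e. a nonempty set of points closed under coordinatewise minimum and maximum. Then the function $d_{\mathcal{L}}:\{0,1\}^n\to\mathbb{R}$, $d_{\mathcal{L}}(x) = \min_{y\in\mathcal{L}} \|x-y\|_1$, is submodular.
   Context: A function $g:\{0,1\}^n\to\mathbb{R}$ is submodular if $g(x\vee y)+g(x\wedge y)\le g(x)+g(y)$ for all $x,y$, where $\vee,\wedge$ are coordinatewise max and min (equivalently, $g(x+\mathbf{e}_i)-g(x)\ge g(y+\mathbf{e}_i)-g(y)$ whenever $x\le y$, $x_i=y_i=0$). *)

theory Defs
  imports Main Complex_Main
begin

text \<open>Points of {0,1}^n are modelled as functions from a finite index type 'n to bool
  (True = 1, False = 0).\<close>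

definition cmax :: "('n \<Rightarrow> bool) \<Rightarrow> ('n \<Rightarrow> bool) \<Rightarrow> ('n \<Rightarrow> bool)" where
  "cmax x y = (\<lambda>i. x i \<or> y i)"

definition cmin :: "('n \<Rightarrow> bool) \<Rightarrow> ('n \<Rightarrow> bool) \<Rightarrow> ('n \<Rightarrow> bool)" where
  "cmin x y = (\<lambda>i. x i \<and> y i)"

definition submodular :: "(('n::finite \<Rightarrow> bool) \<Rightarrow> real) \<Rightarrow> bool" where
  "submodular g \<longleftrightarrow> (\<forall>x y. g (cmax x y) + g (cmin x y) \<le> g x + g y)"

definition is_lattice :: "('n::finite \<Rightarrow> bool) set \<Rightarrow> bool" where
  "is_lattice L \<longleftrightarrow> (\<forall>x\<in>L. \<forall>y\<in>L. cmax x y \<in> L \<and> cmin x y \<in> L)"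

definition l1dist :: "('n::finite \<Rightarrow> bool) \<Rightarrow> ('n \<Rightarrow> bool) \<Rightarrow> real" where
  "l1dist x y = (\<Sum>i\<in>UNIV. \<bar>of_bool (x i) - of_bool (y i)\<bar>)"

definition dist_to :: "('n::finite \<Rightarrow> bool) set \<Rightarrow> ('n \<Rightarrow> bool) \<Rightarrow> real" where
  "dist_to L x = Min ((\<lambda>y. l1dist x y) ` L)"

end

theory Submission
  imports Defs
begin

text \<open>Take nearest points \<open>a\<close> to \<open>x\<close> and \<open>b\<close> to \<open>y\<close> in the lattice. Then \<open>a \<or> b\<close> and \<open>a \<and> b\<close>
  lie in the lattice, and coordinatewise one checks
  \<open>\<bar>(x\<or>y) - (a\<or>b)\<bar> + \<bar>(x\<and>y) - (a\<and>b)\<bar> \<le> \<bar>x - a\<bar> + \<bar>y - b\<bar>\<close>,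
  so summing gives the submodular inequality.\<close>

lemma of_bool_disj_conj_dist_le:
  "\<bar>of_bool (x \<or> y) - (of_bool (a \<or> b) :: real)\<bar> + \<bar>of_bool (x \<and> y) - of_bool (a \<and> b)\<bar>
     \<le> \<bar>of_bool x - of_bool a\<bar> + \<bar>of_bool y - of_bool b\<bar>"
  by (cases x; cases y; cases a; cases b) simp_all

lemma l1dist_cmax_cmin_le:
  "l1dist (cmax x y) (cmax a b) + l1dist (cmin x y) (cmin a b) \<le> l1dist x a + l1dist y b"
  unfolding l1dist_def cmax_def cmin_def sum.distrib[symmetric]
  by (rule sum_mono) (rule of_bool_disj_conj_dist_le)

lemma dist_to_le:
  fixes L :: "('n::finite \<Rightarrow> bool) set"
  assumes "z \<in> L"
  shows "dist_to L x \<le> l1dist x z"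
  unfolding dist_to_def using assms by (intro Min_le) auto

lemma dist_to_attained:
  fixes L :: "('n::finite \<Rightarrow> bool) set"
  assumes "L \<noteq> {}"
  obtains a where "a \<in> L" and "dist_to L x = l1dist x a"
proof -
  have "dist_to L x \<in> (\<lambda>y. l1dist x y) ` L"
    unfolding dist_to_def using assms by (intro Min_in) auto
  then show ?thesis using that by blast
qed

theorem lemma4:
  fixes L :: "('n::finite \<Rightarrow> bool) set"
  assumes "L \<noteq> {}" and "is_lattice L"
  shows "submodular (dist_to L)"
  unfolding submodular_def
proof (intro allI)
  fix x y :: "'n \<Rightarrow> bool"
  obtain a where a: "a \<in> L" "dist_to L x = l1dist x a"
    using dist_to_attained[OF assms(1)] by blast
  obtain b where b: "b \<in> L" "dist_to L y = l1dist y b"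
    using dist_to_attained[OF assms(1)] by blast
  have "cmax a b \<in> L" and "cmin a b \<in> L"
    using assms(2) a(1) b(1) unfolding is_lattice_def by auto
  then have "dist_to L (cmax x y) + dist_to L (cmin x y)
      \<le> l1dist (cmax x y) (cmax a b) + l1dist (cmin x y) (cmin a b)"
    by (intro add_mono dist_to_le)
  also have "\<dots> \<le> l1dist x a + l1dist y b"
    by (rule l1dist_cmax_cmin_le)
  finally show "dist_to L (cmax x y) + dist_to L (cmin x y) \<le> dist_to L x + dist_to L y"
    using a(2) b(2) by simp
qed

end
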